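(* For every integer $L\geq 0$, \[ \sum_{j=-\infty}^{\infty} (-1)^j q^{j^2} \left(\frac{j+1}{3}\right) {2L \brack L+j}_{q^2} = \frac{(q^3;q^6)_L}{(q;q^2)_L}. \]
   Context: For a variable $a$ and integer $n\ge 0$, $(a;q)_n=(1-a)(1-aq)\cdots(1-aq^{n-1})$ (with $(a;q)_0=1$). The $q$-binomial coefficient is ${A \brack B}_q=\frac{(q;q)_A}{(q;q)_B(q;q)_{A-B}}$ if $0\le B\le A$ are integers, and $0$ otherwise; ${A\brack B}_{q^2}$ is the same with $q$ replaced by $q^2$. $\left(\frac{j}{3}\right)$ is the Legendre symbol modulo 3: it equals $1$ if $j\equiv 1 \pmod 3$, $-1$ if $j\equiv -1\pmod 3$, and $0$ if $3\mid j$. *)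

theory Defs
  imports "HOL-Analysis.Analysis"
begin

definition qpoch :: "'a::comm_ring_1 \<Rightarrow> 'a \<Rightarrow> nat \<Rightarrow> 'a" where
  "qpoch a q n = (\<Prod>i<n. 1 - a * q ^ i)"

definition qbinom :: "'a::field \<Rightarrow> int \<Rightarrow> int \<Rightarrow> 'a" where
  "qbinom q A B = (if 0 \<le> B \<and> B \<le> A
      then qpoch q q (nat A) / (qpoch q q (nat B) * qpoch q q (nat (A - B)))
      else 0)"

definition leg3 :: "int \<Rightarrow> int" where
  "leg3 j = (if j mod 3 = 1 then 1 else if j mod 3 = 2 then -1 else 0)"

end

theory Submission
  imports Defs
begin

(* Because the Gaussian binomial is symmetric under j -> -j, the Legendre symbol ((j+1)/3) can
   be replaced by its even part, and 2 times that even part is w^j + w^-j for a primitive cube root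
   of unity w.  Each of the two resulting sums is an instance of the finite Jacobi triple product
     sum_j q^(j^2) z^j [2L, L+j]_(q^2) = prod_(i<L) (1 + z q^(2i+1)) (1 + z^-1 q^(2i+1)),
   a consequence of the q-binomial theorem.  At z = -w each factor becomes 1 + x + x^2 with
   x = q^(2i+1), and 1 + x + x^2 = (1 - x^3) / (1 - x) yields (q^3;q^6)_L / (q;q^2)_L. *)

definition qbinom_nat :: "'a::field \<Rightarrow> nat \<Rightarrow> nat \<Rightarrow> 'a" where
  "qbinom_nat p n k = qbinom p (int n) (int k)"

lemma qpoch_Suc: "qpoch a q (Suc n) = qpoch a q n * (1 - a * q ^ n)"
  by (simp add: qpoch_def)

lemma qpoch_self_nonzero:
  fixes p :: "'a::field"
  assumes "\<And>i. p ^ Suc i \<noteq> 1"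
  shows "qpoch p p n \<noteq> 0"
  using assms by (simp add: qpoch_def)

lemma qbinom_nat_0:
  fixes p :: "'a::field"
  assumes "\<And>i. p ^ Suc i \<noteq> 1"
  shows "qbinom_nat p n 0 = 1"
  using qpoch_self_nonzero[OF assms] by (simp add: qbinom_nat_def qbinom_def qpoch_def)

lemma qbinom_nat_self:
  fixes p :: "'a::field"
  assumes "\<And>i. p ^ Suc i \<noteq> 1"
  shows "qbinom_nat p n n = 1"
  using qpoch_self_nonzero[OF assms] by (simp add: qbinom_nat_def qbinom_def qpoch_def)

lemma qbinom_nat_eq_0: "n < k \<Longrightarrow> qbinom_nat p n k = 0"
  by (simp add: qbinom_nat_def qbinom_def)

lemma qbinom_symmetric: "qbinom p A (A - B) = qbinom p A B"
  by (simp add: qbinom_def mult.commute)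

lemma qbinom_nat_Suc_Suc:
  fixes p :: "'a::field"
  assumes nz: "\<And>i. p ^ Suc i \<noteq> 1"
  shows "qbinom_nat p (Suc n) (Suc k) = qbinom_nat p n k + p ^ Suc k * qbinom_nat p n (Suc k)"
proof (cases "k < n")
  case True
  then obtain a where n: "n = k + Suc a" by (metis add_Suc_right less_imp_Suc_add)
  define P where "P = qpoch p p"
  define u v where "u = 1 - p ^ Suc k" and "v = 1 - p ^ Suc a"
  have P_nz: "P m \<noteq> 0" for m
    using qpoch_self_nonzero[OF nz] by (simp add: P_def)
  have "u \<noteq> 0" "v \<noteq> 0"
    unfolding u_def v_def using nz right_minus_eq by metis+
  have "Suc n = Suc k + Suc a" using n by simp
  then have "p ^ Suc n = (1 - u) * (1 - v)" unfolding u_def v_def by (simp only: power_add) simp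
  then have P_Suc: "P (Suc n) = P n * (1 - (1 - u) * (1 - v))" "P (Suc k) = P k * u"
    "P (Suc a) = P a * v"
    by (simp_all add: P_def qpoch_Suc u_def v_def)
  have qbinom_P: "qbinom_nat p n k = P n / (P k * P (Suc a))"
    "qbinom_nat p n (Suc k) = P n / (P (Suc k) * P a)"
    "qbinom_nat p (Suc n) (Suc k) = P (Suc n) / (P (Suc k) * P (Suc a))"
    unfolding qbinom_nat_def qbinom_def nat_int P_def[symmetric] using n
    by (simp_all add: nat_add_distrib)
  have pk: "p ^ Suc k = 1 - u" by (simp add: u_def)
  show ?thesis
    unfolding qbinom_P P_Suc pk using P_nz[of n] P_nz[of k] P_nz[of a] \<open>u \<noteq> 0\<close> \<open>v \<noteq> 0\<close>
    by (simp add: field_simps)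
next
  case False
  then consider "k = n" | "n < k" by linarith
  then show ?thesis
    by cases (simp_all add: qbinom_nat_self[OF nz] qbinom_nat_eq_0)
qed

lemma choose_two_Suc: "Suc k choose 2 = (k choose 2) + k"
  by (simp add: numeral_2_eq_2)

lemma two_times_choose_two: "2 * (n choose 2) = n * (n - 1)"
  by (induction n) (simp_all add: choose_two_Suc algebra_simps numeral_2_eq_2)

lemma prod_power_lessThan: "(\<Prod>i<n. x ^ i) = (x::'a::comm_monoid_mult) ^ (n choose 2)"
  by (induction n) (simp_all add: choose_two_Suc power_add numeral_2_eq_2 mult.commute)

lemma prod_lessThan_add:
  "(\<Prod>m<a + b. f m) = (\<Prod>m<a. f m) * (\<Prod>i<b. f (a + (i::nat)))"
  by (induction b) (simp_all add: mult_ac)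

lemma q_binomial_theorem:
  fixes p x y :: "'a::field"
  assumes nz: "\<And>i. p ^ Suc i \<noteq> 1"
  shows "(\<Prod>m<n. y + x * p ^ m)
       = (\<Sum>k\<le>n. p ^ (k choose 2) * qbinom_nat p n k * x ^ k * y ^ (n - k))"
proof (induction n arbitrary: x)
  case 0
  then show ?case by (simp add: qbinom_nat_0[OF nz] numeral_2_eq_2)
next
  case (Suc n)
  define S where "S = (\<Sum>k\<le>n. p ^ (k choose 2) * qbinom_nat p n k * (x * p) ^ k * y ^ (n - k))"
  define t where "t k = p ^ (k choose 2) * qbinom_nat p (Suc n) k * x ^ k * y ^ (Suc n - k)" for k
  define g where "g k = p ^ (k choose 2) * qbinom_nat p n k * (x * p) ^ k * y ^ (Suc n - k)" for k
  have "(\<Prod>m<Suc n. y + x * p ^ m) = (y + x) * (\<Prod>m<n. y + (x * p) * p ^ m)"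
    unfolding prod.lessThan_Suc_shift by (simp add: mult.assoc)
  also have "\<dots> = (y + x) * S"
    by (simp only: Suc.IH S_def)
  finally have prod_eq: "(\<Prod>m<Suc n. y + x * p ^ m) = (y + x) * S" .
  have t_Suc: "t (Suc k) = x * (p ^ (k choose 2) * qbinom_nat p n k * (x * p) ^ k * y ^ (n - k))
      + g (Suc k)" for k
    unfolding t_def g_def qbinom_nat_Suc_Suc[OF nz] choose_two_Suc
    by (simp add: algebra_simps power_add power_mult_distrib)
  have "(\<Sum>k\<le>Suc n. g k) = y * S"
    unfolding sum.atMost_Suc S_def sum_distrib_left
    by (simp add: g_def qbinom_nat_eq_0 Suc_diff_le mult_ac)
  then have g_shift: "(\<Sum>k\<le>n. g (Suc k)) = y * S - y ^ Suc n"
    unfolding sum.atMost_Suc_shift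
    by (simp add: g_def qbinom_nat_0[OF nz] numeral_2_eq_2 eq_diff_eq add.commute)
  have "(\<Sum>k\<le>Suc n. t k) = y ^ Suc n + x * S + (\<Sum>k\<le>n. g (Suc k))"
    unfolding sum.atMost_Suc_shift t_Suc sum.distrib S_def sum_distrib_left
    by (simp add: t_def qbinom_nat_0[OF nz] numeral_2_eq_2)
  then show ?case
    unfolding prod_eq t_def g_shift by (simp add: algebra_simps)
qed

lemma q_binomial_product_eq_triple_product:
  fixes q z :: "'a::comm_ring_1"
  shows "(\<Prod>m<2*L. q^(2*L-1) + z * (q^2)^m)
       = (q^2) ^ (L choose 2) * (q^(2*L-1)) ^ L * (\<Prod>i<L. (z + q^(2*i+1)) * (1 + z * q^(2*i+1)))"
proof -
  define f where "f m = q^(2*L-1) + z * (q^2)^m" for m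
  have "(\<Prod>m<L. f m) = (\<Prod>m<L. (q^2)^m * (z + q^(2*(L - Suc m)+1)))"
  proof (rule prod.cong[OF refl])
    fix m assume "m \<in> {..<L}"
    then have "2*L-1 = 2*m + (2*(L - Suc m)+1)" by auto
    then have "q^(2*L-1) = (q^2)^m * q^(2*(L - Suc m)+1)"
      by (metis power_add power_mult)
    then show "f m = (q^2)^m * (z + q^(2*(L - Suc m)+1))"
      by (simp add: f_def algebra_simps)
  qed
  also have "\<dots> = (q^2) ^ (L choose 2) * (\<Prod>i<L. z + q^(2*i+1))"
    unfolding prod.distrib prod_power_lessThan
    using prod.nat_diff_reindex[where g="\<lambda>i. z + q^(2*i+1)"] by simp
  finally have low: "(\<Prod>m<L. f m) = (q^2) ^ (L choose 2) * (\<Prod>i<L. z + q^(2*i+1))" .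
  have "(\<Prod>i<L. f (L+i)) = (\<Prod>i<L. q^(2*L-1) * (1 + z * q^(2*i+1)))"
  proof (rule prod.cong[OF refl])
    fix i assume "i \<in> {..<L}"
    then have "2*(L+i) = (2*L-1) + (2*i+1)" by auto
    then have "(q^2)^(L+i) = q^(2*L-1) * q^(2*i+1)"
      by (metis power_add power_mult)
    then show "f (L+i) = q^(2*L-1) * (1 + z * q^(2*i+1))"
      by (simp add: f_def algebra_simps)
  qed
  then have high: "(\<Prod>i<L. f (L+i)) = (q^(2*L-1)) ^ L * (\<Prod>i<L. 1 + z * q^(2*i+1))"
    by (simp add: prod.distrib)
  have "(\<Prod>m<2*L. f m) = (\<Prod>m<L. f m) * (\<Prod>i<L. f (L+i))"
    by (metis mult_2 prod_lessThan_add)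
  also have "\<dots> = (q^2) ^ (L choose 2) * (q^(2*L-1)) ^ L
      * (\<Prod>i<L. (z + q^(2*i+1)) * (1 + z * q^(2*i+1)))"
    unfolding low high by (simp add: prod.distrib mult_ac)
  finally show ?thesis by (simp only: f_def)
qed

lemma triple_product_exponent:
  assumes "k \<le> 2 * L"
  shows "2 * (k choose 2) + (2 * L - 1) * (2 * L - k)
       = 2 * (L choose 2) + (2 * L - 1) * L + nat ((int k - int L)^2)"
proof (cases "L = 0")
  case False
  have "int (n * (n - 1)) = int n * (int n - 1)" for n by (cases n) (simp_all add: algebra_simps)
  moreover have "int (2 * L - 1) = 2 * int L - 1" "int (2 * L - k) = 2 * int L - int k"
    using assms False by simp_all
  moreover have "int (nat ((int k - int L)^2)) = (int k - int L)^2" by simp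
  ultimately have "int (2 * (k choose 2) + (2 * L - 1) * (2 * L - k))
      = int (2 * (L choose 2) + (2 * L - 1) * L + nat ((int k - int L)^2))"
    unfolding of_nat_add of_nat_mult two_times_choose_two
    by (simp add: algebra_simps power2_eq_square)
  then show ?thesis by (simp only: of_nat_eq_iff)
qed (use assms in simp)

lemma finite_jacobi_triple_product_nat:
  fixes q z :: "'a::field"
  assumes nz: "\<And>i. (q^2) ^ Suc i \<noteq> 1"
  shows "(\<Sum>k\<le>2*L. q ^ nat ((int k - int L)^2) * z ^ k * qbinom_nat (q^2) (2*L) k)
       = (\<Prod>i<L. (z + q^(2*i+1)) * (1 + z * q^(2*i+1)))"
proof (cases "q = 0")
  case True
  have "qpoch (0::'a) 0 n = 1" for n by (simp add: qpoch_def)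
  then have "qbinom_nat (0::'a) (2*L) L = 1" by (simp add: qbinom_nat_def qbinom_def)
  then have "(\<Sum>k\<le>2*L. q ^ nat ((int k - int L)^2) * z ^ k * qbinom_nat (q^2) (2*L) k)
      = (\<Sum>k\<le>2*L. if k = L then z ^ L else 0)"
    using True by (intro sum.cong) (auto simp: power_0_left)
  then show ?thesis using True by simp
next
  case False
  define D where "D = (q^2) ^ (L choose 2) * (q^(2*L-1)) ^ L"
  \<comment> \<open>the q-binomial theorem at p = q^2, x = z, y = q^(2L-1)\<close>
  have "D * (\<Prod>i<L. (z + q^(2*i+1)) * (1 + z * q^(2*i+1)))
      = (\<Sum>k\<le>2*L. (q^2) ^ (k choose 2) * qbinom_nat (q^2) (2*L) k * z^k * (q^(2*L-1))^(2*L-k))"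
    unfolding D_def q_binomial_product_eq_triple_product[symmetric] by (rule q_binomial_theorem[OF nz])
  also have "\<dots> = D * (\<Sum>k\<le>2*L. q ^ nat ((int k - int L)^2) * z ^ k * qbinom_nat (q^2) (2*L) k)"
    unfolding sum_distrib_left
  proof (rule sum.cong[OF refl])
    fix k assume "k \<in> {..2*L}"
    then have k: "k \<le> 2*L" by simp
    have "(q^2) ^ (k choose 2) * (q^(2*L-1))^(2*L-k) = D * q ^ nat ((int k - int L)^2)"
      unfolding D_def power_mult[symmetric] power_add[symmetric] mult.assoc[symmetric]
      by (simp only: triple_product_exponent[OF k])
    then show "(q^2) ^ (k choose 2) * qbinom_nat (q^2) (2*L) k * z^k * (q^(2*L-1))^(2*L-k)
        = D * (q ^ nat ((int k - int L)^2) * z ^ k * qbinom_nat (q^2) (2*L) k)"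
      by (simp add: mult_ac)
  qed
  finally show ?thesis
    using False by (simp add: D_def)
qed

lemma finite_jacobi_triple_product:
  fixes q z :: "'a::field"
  assumes nz: "\<And>i. (q^2) ^ Suc i \<noteq> 1" and z: "z \<noteq> 0"
  shows "(\<Sum>j=-int L..int L. q ^ nat (j^2) * z powi j * qbinom (q^2) (2 * int L) (int L + j))
       = (\<Prod>i<L. (1 + z * q^(2*i+1)) * (1 + inverse z * q^(2*i+1)))"
proof -
  have factor: "(z + x) * (1 + z * x) = z * ((1 + z * x) * (1 + inverse z * x))" for x
    using z by (simp add: field_simps)
  have "(\<Sum>j=-int L..int L. q ^ nat (j^2) * z powi j * qbinom (q^2) (2 * int L) (int L + j))
      = (\<Sum>k\<le>2*L. q ^ nat ((int k - int L)^2) * z powi (int k - int L)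
          * qbinom_nat (q^2) (2*L) k)"
    by (rule sum.reindex_bij_witness[where i="\<lambda>k. int k - int L" and j="\<lambda>j. nat (j + int L)"])
       (auto simp: qbinom_nat_def add.commute)
  also have "\<dots> = inverse z ^ L
      * (\<Sum>k\<le>2*L. q ^ nat ((int k - int L)^2) * z ^ k * qbinom_nat (q^2) (2*L) k)"
    unfolding sum_distrib_left using z
    by (intro sum.cong) (simp_all add: power_int_diff field_simps)
  also have "\<dots> = inverse z ^ L * (\<Prod>i<L. (z + q^(2*i+1)) * (1 + z * q^(2*i+1)))"
    by (simp only: finite_jacobi_triple_product_nat[OF nz])
  also have "\<dots> = (\<Prod>i<L. (1 + z * q^(2*i+1)) * (1 + inverse z * q^(2*i+1)))"
    unfolding factor prod.distrib using z by (simp add: field_simps)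
  finally show ?thesis .
qed

lemma primitive_cube_root_power3:
  assumes "w^2 + w + 1 = (0::'a::comm_ring_1)"
  shows "w ^ 3 = 1"
proof -
  have "w ^ 3 - 1 = (w - 1) * (w^2 + w + 1)"
    by (simp add: algebra_simps power2_eq_square power3_eq_cube)
  then show ?thesis using assms by simp
qed

lemma primitive_cube_root_inverse:
  fixes w :: "'a::field"
  assumes w: "w^2 + w + 1 = 0"
  shows "(inverse w)^2 + inverse w + 1 = 0"
proof -
  have "w \<noteq> 0" using w by auto
  then have "(inverse w)^2 + inverse w + 1 = (w^2 + w + 1) / w^2"
    by (simp add: field_simps power2_eq_square)
  then show ?thesis using w by simp
qed

lemma power_int_mod_three:
  fixes w :: "'a::field"
  assumes w3: "w ^ 3 = 1"
  shows "w powi j = w ^ nat (j mod 3)"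
proof -
  have "w \<noteq> 0" using w3 by auto
  have "w powi (3 * (j div 3)) = 1"
    by (simp add: power_int_mult w3)
  then have "w powi j = w powi (j mod 3)"
    using power_int_add[of w "3 * (j div 3)" "j mod 3"] \<open>w \<noteq> 0\<close> by simp
  then show ?thesis by (simp add: power_int_nonneg_exp)
qed

lemma primitive_cube_root_power_int_sum:
  fixes w :: "'a::field"
  assumes w: "w^2 + w + 1 = 0"
  shows "w powi j + w powi (-j) = (if 3 dvd j then 2 else -1)"
proof -
  have w3: "w ^ 3 = 1" by (rule primitive_cube_root_power3[OF w])
  have w_sq: "w + w^2 = -1" using w by (simp add: eq_neg_iff_add_eq_0 algebra_simps)
  have "j mod 3 = 0 \<and> (-j) mod 3 = 0 \<or> j mod 3 = 1 \<and> (-j) mod 3 = 2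
      \<or> j mod 3 = 2 \<and> (-j) mod 3 = 1" by presburger
  then consider "j mod 3 = 0" "(-j) mod 3 = 0" | "j mod 3 = 1" "(-j) mod 3 = 2"
    | "j mod 3 = 2" "(-j) mod 3 = 1" by blast
  then show ?thesis
    unfolding power_int_mod_three[OF w3, of j] power_int_mod_three[OF w3, of "-j"]
    by cases (simp_all add: dvd_eq_mod_eq_0 w_sq add.commute)
qed

lemma primitive_cube_root_triple_product:
  fixes q w :: "'a::field"
  assumes nz: "\<And>i. (q^2) ^ Suc i \<noteq> 1" and w: "w^2 + w + 1 = 0"
  shows "(\<Sum>j=-int L..int L. (-1) ^ nat \<bar>j\<bar> * q ^ nat (j^2) * w powi j
           * qbinom (q^2) (2 * int L) (int L + j))
       = (\<Prod>i<L. 1 + q^(2*i+1) + (q^(2*i+1))^2)"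
proof -
  have "w \<noteq> 0" using w by auto
  have inverse_w: "inverse (-w) = 1 + w"
    using w \<open>w \<noteq> 0\<close> by (simp add: field_simps power2_eq_square) algebra
  have sign: "(-1) ^ nat \<bar>j\<bar> * w powi j = (-w) powi j" for j :: int
  proof -
    have "(-1::'a) powi j = (-1) ^ nat \<bar>j\<bar>" by (simp add: power_int_def)
    then show ?thesis using power_int_mult_distrib[of "-1" w j] by simp
  qed
  have factor: "(1 + (-w) * x) * (1 + inverse (-w) * x) = 1 + x + x^2" for x
    unfolding inverse_w using w by algebra
  have "(\<Sum>j=-int L..int L. (-1) ^ nat \<bar>j\<bar> * q ^ nat (j^2) * w powi j
           * qbinom (q^2) (2 * int L) (int L + j))
      = (\<Sum>j=-int L..int L. q ^ nat (j^2) * (-w) powi j * qbinom (q^2) (2 * int L) (int L + j))"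
    by (simp add: sign[symmetric] mult_ac)
  also have "\<dots> = (\<Prod>i<L. (1 + (-w) * q^(2*i+1)) * (1 + inverse (-w) * q^(2*i+1)))"
    by (rule finite_jacobi_triple_product[OF nz]) (use \<open>w \<noteq> 0\<close> in simp)
  also have "\<dots> = (\<Prod>i<L. 1 + q^(2*i+1) + (q^(2*i+1))^2)"
    by (simp only: factor)
  finally show ?thesis .
qed

lemma leg3_symmetrized: "leg3 (j + 1) + leg3 (1 - j) = (if 3 dvd j then 2 else -1)"
  unfolding leg3_def by presburger

lemma sum_leg3_of_even:
  fixes f :: "int \<Rightarrow> 'a::field"
  assumes even: "\<And>j. f (-j) = f j" and w: "w^2 + w + 1 = 0"
  shows "2 * (\<Sum>j=-n..n. f j * of_int (leg3 (j + 1)))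
       = (\<Sum>j=-n..n. f j * w powi j) + (\<Sum>j=-n..n. f j * inverse w powi j)"
proof -
  define S where "S = (\<Sum>j=-n..n. f j * of_int (leg3 (j + 1)))"
  have reflect: "(\<Sum>j=-n..n. f j * of_int (leg3 (1 - j))) = S"
    unfolding S_def
    by (rule sum.reindex_bij_witness[where i=uminus and j=uminus]) (auto simp: even)
  have leg3_eq: "of_int (leg3 (j + 1) + leg3 (1 - j)) = w powi j + inverse w powi j" for j
    using primitive_cube_root_power_int_sum[OF w, of j]
    by (simp add: leg3_symmetrized power_int_minus power_int_inverse)
  have "2 * S = S + (\<Sum>j=-n..n. f j * of_int (leg3 (1 - j)))"
    by (simp add: reflect)
  also have "\<dots> = (\<Sum>j=-n..n. f j * of_int (leg3 (j + 1) + leg3 (1 - j)))"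
    unfolding S_def sum.distrib[symmetric] by (simp add: distrib_left)
  also have "\<dots> = (\<Sum>j=-n..n. f j * w powi j) + (\<Sum>j=-n..n. f j * inverse w powi j)"
    unfolding leg3_eq by (simp add: sum.distrib[symmetric] distrib_left)
  finally show ?thesis unfolding S_def .
qed

lemma qpoch_cube_factor:
  fixes q :: "'a::comm_ring_1"
  shows "qpoch (q^3) (q^6) L = qpoch q (q^2) L * (\<Prod>i<L. 1 + q^(2*i+1) + (q^(2*i+1))^2)"
  unfolding qpoch_def prod.distrib[symmetric]
proof (rule prod.cong[OF refl])
  fix i
  have "q^3 * (q^6)^i = (q^(2*i+1))^3" "q * (q^2)^i = q^(2*i+1)"
    by (simp_all add: power_mult[symmetric] power_add[symmetric] algebra_simps)
  then show "1 - q^3 * (q^6)^i = (1 - q * (q^2)^i) * (1 + q^(2*i+1) + (q^(2*i+1))^2)"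
    by (simp add: algebra_simps power2_eq_square power3_eq_cube)
qed

lemma power_neq_one_if_norm_less_one:
  fixes q :: "'a::real_normed_div_algebra"
  assumes "norm q < 1" "0 < n"
  shows "q ^ n \<noteq> 1"
proof
  assume "q ^ n = 1"
  then have "norm q ^ n = 1" by (metis norm_one norm_power)
  moreover have "norm q ^ n < 1" using assms power_less_one_iff[of "norm q" n] by simp
  ultimately show False by simp
qed

lemma qpoch_nonzero:
  fixes a q :: "'a::real_normed_field"
  assumes "norm a < 1" "norm q \<le> 1"
  shows "qpoch a q n \<noteq> 0"
proof -
  have "norm (a * q ^ i) \<le> norm a" for i
    using assms by (simp add: norm_mult norm_power mult_left_le power_le_one)
  then have "a * q ^ i \<noteq> 1" for i
    using assms by (metis norm_one not_le)
  then show ?thesis by (simp add: qpoch_def)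
qed

theorem theorem2p4:
  fixes q :: complex and L :: nat
  assumes "norm q < 1"
  shows "(\<Sum>\<^sub>\<infinity> j::int. (-1) ^ nat \<bar>j\<bar> * q ^ nat (j^2) * of_int (leg3 (j + 1))
             * qbinom (q^2) (2 * int L) (int L + j))
         = qpoch (q^3) (q^6) L / qpoch q (q^2) L"
proof -
  define f where "f j = (-1) ^ nat \<bar>j\<bar> * q ^ nat (j^2) * qbinom (q^2) (2 * int L) (int L + j)"
    for j :: int
  define P where "P = (\<Prod>i<L. 1 + q^(2*i+1) + (q^(2*i+1))^2)"
  define \<omega> where "\<omega> = Complex (-1/2) (sqrt 3 / 2)"
  have \<omega>: "\<omega>^2 + \<omega> + 1 = 0"
    by (simp add: \<omega>_def complex_eq_iff power2_eq_square)
  have nz: "(q^2) ^ Suc i \<noteq> 1" for i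
    unfolding power_mult[symmetric] by (rule power_neq_one_if_norm_less_one[OF assms]) simp
  have qpoch_nz: "qpoch q (q^2) L \<noteq> 0"
    using assms by (intro qpoch_nonzero) (simp_all add: norm_power power_le_one)
  have twisted: "(\<Sum>j=-int L..int L. f j * w powi j) = P" if "w^2 + w + 1 = 0" for w
    using primitive_cube_root_triple_product[OF nz that] by (simp add: f_def P_def mult_ac)
  have f_even: "f (-j) = f j" for j
    using qbinom_symmetric[of "q^2" "2 * int L" "int L + j"] by (simp add: f_def)
  have "(\<Sum>j=-int L..int L. f j * of_int (leg3 (j + 1))) = P"
    using sum_leg3_of_even[where f=f, OF f_even \<omega>, of "int L"]
    unfolding twisted[OF \<omega>] twisted[OF primitive_cube_root_inverse[OF \<omega>]] by simp
  moreover have "(\<Sum>\<^sub>\<infinity> j::int. (-1) ^ nat \<bar>j\<bar> * q ^ nat (j^2) * of_int (leg3 (j + 1))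
             * qbinom (q^2) (2 * int L) (int L + j))
      = (\<Sum>j=-int L..int L. f j * of_int (leg3 (j + 1)))"
    by (subst infsum_cong_neutral[where T="{-int L..int L}"]) (auto simp: f_def qbinom_def mult_ac)
  ultimately show ?thesis
    using qpoch_nz by (simp add: qpoch_cube_factor P_def)
qed

end
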